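(* In the HTLC game described in the context, for any $k\in[1,T-1]$, the unique subgame perfect equilibrium in $G^{H}(k,\mathrm{red})$ is that every miner includes an unrelated transaction, and the utility of miner $i$ when doing so is $\lambda_i\big((T-k)f+f^{h}_{\mathcal{B}}\big)$.
   Context: Blockchain model: $n$ miners; miner $i$ has mining power $\lambda_i>0$, $\sum_i\lambda_i=1$, $\lambda_{\min}=\min_i\lambda_i$. Each round exactly one miner is chosen, miner $i$ with probability $\lambda_i$, and creates a block containing one transaction of her choice, receiving its fee. An unrelated transaction offering base fee $f$ is always available. A contract can be redeemed at most once. Miners are rational, non-myopic, with perfect information, maximizing expected tokens. HTLC: a contract holding $v^{\mathrm{dep}}$ tokens initiated in block $b_j$, with digest $dig_a=H(pre_a)$ and timeout $T$, redeemable via htlc-A (signature of $\mathcal{A}$ and $pre_a$; any block) or htlc-B (signature of $\mathcal{B}$; only at least $T$ blocks after initiation). The HTLC game has $T$ rounds creating $b_{j+1},\dots,b_{j+T}$. $\mathcal{A}$ publishes $tx^{h}_{\mathcal{A}}$ (redeems via htlc-A, fee $f^{h}_{\mathcal{A}}$, $f<f^{h}_{\mathcal{A}}<v^{\mathrm{dep}}$) in the first round, and $\mathcal{B}$ publishes $tx^{h}_{\mathcal{B}}$ (redeems via htlc-B, fee $f^{h}_{\mathcal{B}}<v^{\mathrm{dep}}$) with $f^{h}_{\mathcal{B}}>\frac{f^{h}_{\mathcal{A}}-f}{\lambda_{\min}}+f$. A miner can include an unrelated transaction (reward $f$) in any round; $tx^{h}_{\mathcal{A}}$ (reward $f^{h}_{\mathcal{A}}$)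 in any round while the HTLC is unredeemed; $tx^{h}_{\mathcal{B}}$ (reward $f^{h}_{\mathcal{B}}$) only in round $T$ while the HTLC is unredeemed. $G^{H}(k,s)$ denotes the subgame just before round $k\in[1,T]$ (with $T-k+1$ blocks remaining) with the HTLC redeemable ($\mathrm{red}$) or already redeemed ($\mathrm{irred}$). A miner's utility in a subgame is the expected tokens she accumulates within it. *)

theory Defs
  imports Complex_Main
begin

text \<open>HTLC game. Miners are indexed by 0..<n. States of the HTLC: redeemable / redeemed.\<close>

datatype hstate = Red | Irred

datatype haction = Unrel | TxA | TxB

definition valid_action :: "nat \<Rightarrow> nat \<Rightarrow> hstate \<Rightarrow> haction \<Rightarrow> bool" where
  "valid_action T k s a \<longleftrightarrow>
     a = Unrel \<or> (a = TxA \<and> s = Red) \<or> (a = TxB \<and> s = Red \<and> k = T)"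

definition reward :: "real \<Rightarrow> real \<Rightarrow> real \<Rightarrow> haction \<Rightarrow> real" where
  "reward f fA fB a = (case a of Unrel \<Rightarrow> f | TxA \<Rightarrow> fA | TxB \<Rightarrow> fB)"

definition next_state :: "haction \<Rightarrow> hstate \<Rightarrow> hstate" where
  "next_state a s = (case a of Unrel \<Rightarrow> s | _ \<Rightarrow> Irred)"

text \<open>A strategy profile: miner j, in round k, in state s, includes action sigma j k s.\<close>
type_synonym profile = "nat \<Rightarrow> nat \<Rightarrow> hstate \<Rightarrow> haction"

text \<open>Expected tokens of miner i accumulated in the next r rounds, starting at round k in state s.\<close>
fun util_aux :: "nat \<Rightarrow> (nat \<Rightarrow> real) \<Rightarrow> real \<Rightarrow> real \<Rightarrow> real \<Rightarrow> profile \<Rightarrow> nat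
                 \<Rightarrow> nat \<Rightarrow> nat \<Rightarrow> hstate \<Rightarrow> real" where
  "util_aux n lam f fA fB \<sigma> i 0 k s = 0"
| "util_aux n lam f fA fB \<sigma> i (Suc r) k s =
     (\<Sum>j<n. lam j * ((if j = i then reward f fA fB (\<sigma> j k s) else 0)
                      + util_aux n lam f fA fB \<sigma> i r (Suc k) (next_state (\<sigma> j k s) s)))"

definition util :: "nat \<Rightarrow> nat \<Rightarrow> (nat \<Rightarrow> real) \<Rightarrow> real \<Rightarrow> real \<Rightarrow> real \<Rightarrow> profile
                    \<Rightarrow> nat \<Rightarrow> nat \<Rightarrow> hstate \<Rightarrow> real" where
  "util T n lam f fA fB \<sigma> i k s = util_aux n lam f fA fB \<sigma> i (T + 1 - k) k s"

definition valid_strategy :: "nat \<Rightarrow> (nat \<Rightarrow> hstate \<Rightarrow> haction) \<Rightarrow> bool" where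
  "valid_strategy T \<tau> \<longleftrightarrow> (\<forall>k s. valid_action T k s (\<tau> k s))"

definition valid_profile :: "nat \<Rightarrow> nat \<Rightarrow> profile \<Rightarrow> bool" where
  "valid_profile T n \<sigma> \<longleftrightarrow> (\<forall>j<n. valid_strategy T (\<sigma> j))"

definition is_SPE :: "nat \<Rightarrow> nat \<Rightarrow> (nat \<Rightarrow> real) \<Rightarrow> real \<Rightarrow> real \<Rightarrow> real \<Rightarrow> profile
                      \<Rightarrow> nat \<Rightarrow> bool" where
  "is_SPE T n lam f fA fB \<sigma> k0 \<longleftrightarrow>
     valid_profile T n \<sigma> \<and>
     (\<forall>k s i \<tau>. k0 \<le> k \<and> k \<le> T \<and> i < n \<and> valid_strategy T \<tau> \<longrightarrow>
        util T n lam f fA fB (\<sigma>(i := \<tau>)) i k s \<le> util T n lam f fA fB \<sigma> i k s)"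

end

theory Submission
  imports Defs
begin

(* Backward induction. Once the HTLC is redeemed only unrelated transactions remain, worth
   \<lambda>_i f per round to miner i. In round T the fee of tx_B is the largest reward available.
   In a round k < T, if everybody later waits for the timeout, including tx_A is worth
   f_A + (T - k) \<lambda>_i f to miner i while waiting is worth f + \<lambda>_i ((T - k - 1) f + f_B); the
   bound on f_B gives \<lambda>_i (f_B - f) > f_A - f, so waiting is strictly better for every
   miner. Strictness yields uniqueness, and the one-shot deviation principle turns these
   round-by-round comparisons into subgame perfection. *)

lemma sum_change_one:
  fixes g :: "'a \<Rightarrow> 'b \<Rightarrow> 'c::ab_group_add"
  assumes "finite A" "i \<in> A" "\<forall>j\<in>A - {i}. h' j = h j"
  shows "(\<Sum>j\<in>A. g j (h' j)) = (\<Sum>j\<in>A. g j (h j)) + (g i (h' i) - g i (h i))"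
proof -
  have "(\<Sum>j\<in>A - {i}. g j (h' j)) = (\<Sum>j\<in>A - {i}. g j (h j))"
    using assms(3) by (intro sum.cong) auto
  then show ?thesis
    using assms(1,2) by (simp add: sum.remove)
qed

lemma sum_weighted_delta_plus_const:
  fixes w :: "'a \<Rightarrow> 'b::comm_ring_1"
  assumes "finite A" "i \<in> A" "sum w A = 1"
  shows "(\<Sum>j\<in>A. w j * ((if j = i then x else 0) + c)) = w i * x + c"
proof -
  have "(\<Sum>j\<in>A. w j * ((if j = i then x else 0) + c))
      = (\<Sum>j\<in>A. if j = i then w j * x else 0) + sum w A * c"
    by (auto simp: distrib_left sum.distrib sum_distrib_right intro!: sum.cong)
  then show ?thesis
    using assms by simp
qed

lemma util_aux_cong:
  assumes "\<forall>j<n. \<forall>k'\<ge>k. \<forall>s. \<sigma> j k' s = \<sigma>' j k' s"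
  shows "util_aux n lam f fA fB \<sigma> i r k s = util_aux n lam f fA fB \<sigma>' i r k s"
  using assms
proof (induction r arbitrary: k s)
  case (Suc r)
  then have "\<forall>j<n. \<forall>k'\<ge>Suc k. \<forall>s. \<sigma> j k' s = \<sigma>' j k' s"
    by auto
  with Suc show ?case
    by (auto intro!: sum.cong)
qed simp

locale htlc_game =
  fixes T n :: nat and lam :: "nat \<Rightarrow> real" and f fA fB :: real
  assumes lam_pos: "\<forall>i<n. lam i > 0"
    and lam_sum: "(\<Sum>i<n. lam i) = 1"
begin

(* r counts the rounds after round k: in the subgame starting at round k it is T - k. *)
definition action_value :: "profile \<Rightarrow> nat \<Rightarrow> nat \<Rightarrow> nat \<Rightarrow> hstate \<Rightarrow> haction \<Rightarrow> real" where
  "action_value \<sigma> i r k s a =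
     reward f fA fB a + util_aux n lam f fA fB \<sigma> i r (Suc k) (next_state a s)"

lemma util_aux_Suc_change_action:
  assumes "i < n"
  shows "(\<Sum>j<n. lam j * ((if j = i then reward f fA fB ((\<sigma>(i := \<tau>)) j k s) else 0)
            + util_aux n lam f fA fB \<sigma> i r (Suc k) (next_state ((\<sigma>(i := \<tau>)) j k s) s)))
       = util_aux n lam f fA fB \<sigma> i (Suc r) k s
         + lam i * (action_value \<sigma> i r k s (\<tau> k s) - action_value \<sigma> i r k s (\<sigma> i k s))"
proof -
  define g where "g j a = lam j * ((if j = i then reward f fA fB a else 0)
      + util_aux n lam f fA fB \<sigma> i r (Suc k) (next_state a s))" for j a
  have "(\<Sum>j<n. g j ((\<sigma>(i := \<tau>)) j k s))
      = (\<Sum>j<n. g j (\<sigma> j k s)) + (g i (\<tau> k s) - g i (\<sigma> i k s))"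
    using sum_change_one[of "{..<n}" i "\<lambda>j. (\<sigma>(i := \<tau>)) j k s" "\<lambda>j. \<sigma> j k s" g] assms
    by simp
  then show ?thesis
    unfolding g_def action_value_def util_aux.simps by (simp add: right_diff_distrib)
qed

lemma util_aux_Suc_one_shot_deviation:
  assumes "i < n" "\<forall>k'>k. \<tau> k' = \<sigma> i k'"
  shows "util_aux n lam f fA fB (\<sigma>(i := \<tau>)) i (Suc r) k s
       = util_aux n lam f fA fB \<sigma> i (Suc r) k s
         + lam i * (action_value \<sigma> i r k s (\<tau> k s) - action_value \<sigma> i r k s (\<sigma> i k s))"
proof -
  have "util_aux n lam f fA fB (\<sigma>(i := \<tau>)) i r (Suc k) s'
      = util_aux n lam f fA fB \<sigma> i r (Suc k) s'" for s'
    using assms(2) by (intro util_aux_cong) auto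
  then show ?thesis
    unfolding util_aux.simps(2)[of _ _ _ _ _ "\<sigma>(i := \<tau>)"]
    by (simp only: util_aux_Suc_change_action[OF assms(1)])
qed

lemma util_aux_deviation_le:
  assumes "i < n" "valid_strategy T \<tau>"
    and no_gain: "\<And>k' r' s a. k \<le> k' \<Longrightarrow> k' + Suc r' = k + r \<Longrightarrow> valid_action T k' s a \<Longrightarrow>
      action_value \<sigma> i r' k' s a \<le> action_value \<sigma> i r' k' s (\<sigma> i k' s)"
  shows "util_aux n lam f fA fB (\<sigma>(i := \<tau>)) i r k s \<le> util_aux n lam f fA fB \<sigma> i r k s"
  using no_gain
proof (induction r arbitrary: k s)
  case (Suc r)
  have IH: "util_aux n lam f fA fB (\<sigma>(i := \<tau>)) i r (Suc k) s'
      \<le> util_aux n lam f fA fB \<sigma> i r (Suc k) s'" for s'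
    using Suc.prems by (intro Suc.IH) auto
  have "util_aux n lam f fA fB (\<sigma>(i := \<tau>)) i (Suc r) k s
      \<le> (\<Sum>j<n. lam j * ((if j = i then reward f fA fB ((\<sigma>(i := \<tau>)) j k s) else 0)
            + util_aux n lam f fA fB \<sigma> i r (Suc k) (next_state ((\<sigma>(i := \<tau>)) j k s) s)))"
    unfolding util_aux.simps
    using lam_pos by (intro sum_mono mult_left_mono add_left_mono IH) auto
  also have "\<dots> = util_aux n lam f fA fB \<sigma> i (Suc r) k s
         + lam i * (action_value \<sigma> i r k s (\<tau> k s) - action_value \<sigma> i r k s (\<sigma> i k s))"
    using util_aux_Suc_change_action assms(1) .
  also have "\<dots> \<le> util_aux n lam f fA fB \<sigma> i (Suc r) k s"
  proof -
    have "action_value \<sigma> i r k s (\<tau> k s) - action_value \<sigma> i r k s (\<sigma> i k s) \<le> 0"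
      using Suc.prems assms(2) by (simp add: valid_strategy_def)
    moreover have "0 \<le> lam i"
      using lam_pos assms(1) by (simp add: less_imp_le)
    ultimately show ?thesis
      by (simp add: mult_nonneg_nonpos)
  qed
  finally show ?case .
qed simp

lemma SPE_action_value_le:
  assumes SPE: "is_SPE T n lam f fA fB \<sigma> k0"
    and "k0 \<le> k" "k \<le> T" "j < n" "valid_action T k s a"
  shows "action_value \<sigma> j (T - k) k s a \<le> action_value \<sigma> j (T - k) k s (\<sigma> j k s)"
proof -
  define \<tau> where "\<tau> = (\<sigma> j)(k := (\<sigma> j k)(s := a))"
  have "valid_strategy T \<tau>"
    using SPE assms by (auto simp: \<tau>_def is_SPE_def valid_profile_def valid_strategy_def)
  then have "util T n lam f fA fB (\<sigma>(j := \<tau>)) j k s \<le> util T n lam f fA fB \<sigma> j k s"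
    using SPE assms by (auto simp: is_SPE_def)
  moreover have "T + 1 - k = Suc (T - k)"
    using assms(3) by simp
  moreover have "\<forall>k'>k. \<tau> k' = \<sigma> j k'" "\<tau> k s = a"
    by (auto simp: \<tau>_def)
  ultimately have "lam j * (action_value \<sigma> j (T - k) k s a
      - action_value \<sigma> j (T - k) k s (\<sigma> j k s)) \<le> 0"
    using util_aux_Suc_one_shot_deviation[OF assms(4)] by (simp add: util_def)
  then show ?thesis
    using lam_pos[rule_format, OF assms(4)] by (simp add: mult_le_0_iff)
qed

theorem is_SPE_iff_no_one_shot_gain:
  "is_SPE T n lam f fA fB \<sigma> k0 \<longleftrightarrow> valid_profile T n \<sigma> \<and>
     (\<forall>k s j a. k0 \<le> k \<and> k \<le> T \<and> j < n \<and> valid_action T k s a \<longrightarrow>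
        action_value \<sigma> j (T - k) k s a \<le> action_value \<sigma> j (T - k) k s (\<sigma> j k s))"
    (is "_ \<longleftrightarrow> _ \<and> ?one_shot")
proof
  assume "is_SPE T n lam f fA fB \<sigma> k0"
  then show "valid_profile T n \<sigma> \<and> ?one_shot"
    using SPE_action_value_le by (auto simp: is_SPE_def)
next
  assume one_shot: "valid_profile T n \<sigma> \<and> ?one_shot"
  show "is_SPE T n lam f fA fB \<sigma> k0"
    unfolding is_SPE_def util_def
  proof (intro conjI allI impI)
    fix k s i \<tau>
    assume h: "k0 \<le> k \<and> k \<le> T \<and> i < n \<and> valid_strategy T \<tau>"
    have "action_value \<sigma> i r' k' s' a \<le> action_value \<sigma> i r' k' s' (\<sigma> i k' s')"
      if "k \<le> k'" "k' + Suc r' = k + (T + 1 - k)" "valid_action T k' s' a" for k' r' s' a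
    proof -
      have "r' = T - k'" "k' \<le> T"
        using that(1,2) h by auto
      then show ?thesis
        using one_shot that h by auto
    qed
    then show "util_aux n lam f fA fB (\<sigma>(i := \<tau>)) i (T + 1 - k) k s
        \<le> util_aux n lam f fA fB \<sigma> i (T + 1 - k) k s"
      using h by (intro util_aux_deviation_le) auto
  qed (use one_shot in simp)
qed

lemma util_aux_Irred:
  assumes "valid_profile T n \<sigma>" "i < n"
  shows "util_aux n lam f fA fB \<sigma> i r k Irred = real r * lam i * f"
proof (induction r arbitrary: k)
  case (Suc r)
  have "\<forall>j<n. \<sigma> j k Irred = Unrel"
    using assms(1) by (auto simp: valid_profile_def valid_strategy_def valid_action_def)
  then have "util_aux n lam f fA fB \<sigma> i (Suc r) k Irred
      = (\<Sum>j<n. lam j * ((if j = i then f else 0) + real r * lam i * f))"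
    using Suc by (auto intro!: sum.cong simp: reward_def next_state_def)
  also have "\<dots> = lam i * f + real r * lam i * f"
    using sum_weighted_delta_plus_const[of "{..<n}" i lam f "real r * lam i * f"] assms(2) lam_sum
    by simp
  finally show ?case
    by (simp add: algebra_simps)
qed simp

end

definition timeout_action :: "nat \<Rightarrow> nat \<Rightarrow> haction" where
  "timeout_action T k = (if k = T then TxB else Unrel)"

definition timeout_profile :: "nat \<Rightarrow> profile" where
  "timeout_profile T j k s = (if s = Red then timeout_action T k else Unrel)"

definition plays_timeout_from :: "nat \<Rightarrow> nat \<Rightarrow> nat \<Rightarrow> profile \<Rightarrow> bool" where
  "plays_timeout_from T n k \<sigma> \<longleftrightarrow>
     (\<forall>j<n. \<forall>k'. k \<le> k' \<and> k' \<le> T \<longrightarrow> \<sigma> j k' Red = timeout_action T k')"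

lemma plays_timeout_from_iff:
  assumes "k \<le> T"
  shows "plays_timeout_from T n k \<sigma> \<longleftrightarrow>
    (\<forall>j<n. \<sigma> j k Red = timeout_action T k) \<and> (k < T \<longrightarrow> plays_timeout_from T n (Suc k) \<sigma>)"
  unfolding plays_timeout_from_def
proof (intro iffI conjI impI allI)
  fix j k'
  assume "(\<forall>j<n. \<sigma> j k Red = timeout_action T k) \<and>
      (k < T \<longrightarrow> (\<forall>j<n. \<forall>k'. Suc k \<le> k' \<and> k' \<le> T \<longrightarrow> \<sigma> j k' Red = timeout_action T k'))"
    and "j < n" "k \<le> k' \<and> k' \<le> T"
  then show "\<sigma> j k' Red = timeout_action T k'"
    by (cases "k' = k") auto
qed (use assms in auto)

lemma (in htlc_game) util_aux_Red_timeout: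
  assumes "plays_timeout_from T n k \<sigma>" "k \<le> T" "i < n"
  shows "util_aux n lam f fA fB \<sigma> i (Suc (T - k)) k Red = lam i * (real (T - k) * f + fB)"
  using assms(2,1)
proof (induction k rule: inc_induct)
  case base
  then have "\<forall>j<n. \<sigma> j T Red = TxB"
    by (simp add: plays_timeout_from_def timeout_action_def)
  then have "util_aux n lam f fA fB \<sigma> i (Suc 0) T Red
      = (\<Sum>j<n. lam j * ((if j = i then fB else 0) + 0))"
    by (auto intro!: sum.cong simp: reward_def)
  also have "\<dots> = lam i * fB"
    using sum_weighted_delta_plus_const[of "{..<n}" i lam fB 0] assms(3) lam_sum by simp
  finally show ?case
    by simp
next
  case (step k)
  then have "\<forall>j<n. \<sigma> j k Red = Unrel" "plays_timeout_from T n (Suc k) \<sigma>"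
    using plays_timeout_from_iff[of k T n \<sigma>] by (simp_all add: timeout_action_def)
  moreover have "T - k = Suc (T - Suc k)"
    using step.hyps by simp
  ultimately have "util_aux n lam f fA fB \<sigma> i (Suc (T - k)) k Red
      = (\<Sum>j<n. lam j * ((if j = i then f else 0) + lam i * (real (T - Suc k) * f + fB)))"
    using step.IH by (auto intro!: sum.cong simp: reward_def next_state_def)
  also have "\<dots> = lam i * f + lam i * (real (T - Suc k) * f + fB)"
    using sum_weighted_delta_plus_const[of "{..<n}" i lam] assms(3) lam_sum by simp
  finally show ?case
    using step.hyps by (simp add: of_nat_diff algebra_simps)
qed

lemma fee_gap_of_Min_bound:
  fixes lam :: "'a \<Rightarrow> real"
  assumes "finite A" "\<forall>j\<in>A. 0 < lam j" "f < fA" "(fA - f) / Min (lam ` A) + f < fB" "j \<in> A"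
  shows "fA - f < lam j * (fB - f)"
proof -
  have "Min (lam ` A) \<in> lam ` A"
    using assms(1,5) by (intro Min_in) auto
  then have "0 < Min (lam ` A)"
    using assms(2) by auto
  moreover have "Min (lam ` A) \<le> lam j"
    using assms(1,5) by simp
  ultimately have "(fA - f) / lam j \<le> (fA - f) / Min (lam ` A)"
    using assms(3) by (intro divide_left_mono) auto
  then have "(fA - f) / lam j < fB - f"
    using assms(4) by simp
  then show ?thesis
    using assms(2,5) by (simp add: pos_divide_less_eq mult.commute)
qed

locale htlc_fee_gap = htlc_game +
  assumes f_lt_fA: "f < fA"
    and fee_gap: "\<forall>j<n. fA - f < lam j * (fB - f)"
begin

lemma fA_lt_fB: "fA < fB"
proof -
  have "n \<noteq> 0"
    using lam_sum by (cases n) auto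
  then have "lam 0 > 0" "fA - f < lam 0 * (fB - f)"
    using lam_pos fee_gap by auto
  moreover have "lam 0 \<le> 1"
    using lam_pos \<open>n \<noteq> 0\<close> member_le_sum[of 0 "{..<n}" lam] lam_sum by (simp add: less_imp_le)
  ultimately have "0 < fB - f"
    using f_lt_fA zero_less_mult_pos[of "lam 0" "fB - f"] by linarith
  then have "lam 0 * (fB - f) \<le> fB - f"
    using \<open>lam 0 > 0\<close> \<open>lam 0 \<le> 1\<close> by (intro mult_left_le_one_le) auto
  then show ?thesis
    using \<open>fA - f < lam 0 * (fB - f)\<close> by linarith
qed

lemma timeout_action_strictly_best:
  assumes "valid_profile T n \<sigma>" "j < n" "k \<le> T"
    and "k < T \<longrightarrow> plays_timeout_from T n (Suc k) \<sigma>"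
    and "valid_action T k Red a" "a \<noteq> timeout_action T k"
  shows "action_value \<sigma> j (T - k) k Red a < action_value \<sigma> j (T - k) k Red (timeout_action T k)"
proof (cases "k = T")
  case True
  then show ?thesis
    using assms(6) f_lt_fA fA_lt_fB
    by (cases a) (auto simp: action_value_def reward_def timeout_action_def)
next
  case False
  then have "a = TxA"
    using assms(5,6) by (cases a) (auto simp: valid_action_def timeout_action_def)
  have "k < T" "T - k = Suc (T - Suc k)"
    using False assms(3) by auto
  then have "util_aux n lam f fA fB \<sigma> j (T - k) (Suc k) Red = lam j * (real (T - Suc k) * f + fB)"
    using util_aux_Red_timeout assms(2,4) by simp
  moreover have "util_aux n lam f fA fB \<sigma> j (T - k) (Suc k) Irred = real (T - k) * lam j * f"
    using util_aux_Irred assms(1,2) .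
  moreover have "fA - f < lam j * (fB - f)"
    using fee_gap assms(2) by simp
  ultimately show ?thesis
    using \<open>a = TxA\<close> \<open>k < T\<close>
    by (simp add: action_value_def reward_def next_state_def timeout_action_def of_nat_diff
        algebra_simps)
qed

lemma timeout_profile_is_SPE: "is_SPE T n lam f fA fB (timeout_profile T) k0"
  unfolding is_SPE_iff_no_one_shot_gain
proof (intro conjI allI impI)
  show valid: "valid_profile T n (timeout_profile T)"
    by (simp add: valid_profile_def valid_strategy_def valid_action_def timeout_profile_def
        timeout_action_def)
  fix k s j a
  assume h: "k0 \<le> k \<and> k \<le> T \<and> j < n \<and> valid_action T k s a"
  have plays: "plays_timeout_from T n (Suc k) (timeout_profile T)"
    by (simp add: plays_timeout_from_def timeout_profile_def)
  consider "s = Irred" | "s = Red" "a = timeout_action T k" | "s = Red" "a \<noteq> timeout_action T k"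
    by (cases s) auto
  then show "action_value (timeout_profile T) j (T - k) k s a
      \<le> action_value (timeout_profile T) j (T - k) k s (timeout_profile T j k s)"
  proof cases
    case 1
    then show ?thesis
      using h by (simp add: valid_action_def timeout_profile_def)
  next
    case 2
    then show ?thesis
      by (simp add: timeout_profile_def)
  next
    case 3
    then show ?thesis
      using timeout_action_strictly_best[OF valid, of j k a] h plays
      by (simp add: timeout_profile_def)
  qed
qed

lemma SPE_plays_timeout:
  assumes SPE: "is_SPE T n lam f fA fB \<sigma> k0" and "k0 \<le> k" "k \<le> T"
  shows "plays_timeout_from T n k \<sigma>"
proof -
  have current: "\<sigma> j k' Red = timeout_action T k'"
    if "k0 \<le> k'" "k' \<le> T" "j < n" "k' < T \<longrightarrow> plays_timeout_from T n (Suc k') \<sigma>" for j k'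
  proof (rule ccontr)
    assume deviates: "\<sigma> j k' Red \<noteq> timeout_action T k'"
    have valid: "valid_profile T n \<sigma>"
      using SPE by (simp add: is_SPE_def)
    then have "valid_action T k' Red (\<sigma> j k' Red)"
      using that(3) by (simp add: valid_profile_def valid_strategy_def)
    then have "action_value \<sigma> j (T - k') k' Red (\<sigma> j k' Red)
        < action_value \<sigma> j (T - k') k' Red (timeout_action T k')"
      using timeout_action_strictly_best[OF valid that(3,2,4)] deviates by simp
    moreover have "action_value \<sigma> j (T - k') k' Red (timeout_action T k')
        \<le> action_value \<sigma> j (T - k') k' Red (\<sigma> j k' Red)"
      using SPE_action_value_le[OF SPE that(1-3)] by (simp add: valid_action_def timeout_action_def)
    ultimately show False
      by simp
  qed
  show ?thesis
    using assms(3,2)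
  proof (induction k rule: inc_induct)
    case base
    then show ?case
      using current plays_timeout_from_iff[of T T n \<sigma>] by simp
  next
    case (step k)
    then show ?case
      using current plays_timeout_from_iff[of k T n \<sigma>] by simp
  qed
qed

end

theorem lemma9:
  fixes n T k :: nat and lam :: "nat \<Rightarrow> real" and f fA fB vdep :: real
  assumes lam_pos: "\<forall>i<n. lam i > 0"
    and lam_sum: "(\<Sum>i<n. lam i) = 1"
    and fA_bounds: "f < fA" "fA < vdep"
    and fB_lt: "fB < vdep"
    and fB_gt: "fB > (fA - f) / Min (lam ` {..<n}) + f"
    and k_range: "1 \<le> k" "k \<le> T - 1"
  shows "(\<exists>\<sigma>. is_SPE T n lam f fA fB \<sigma> k) \<and>
         (\<forall>\<sigma>. is_SPE T n lam f fA fB \<sigma> k \<longrightarrow>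
            (\<forall>j<n. \<sigma> j k Red = Unrel) \<and>
            (\<forall>i<n. util T n lam f fA fB \<sigma> i k Red = lam i * (real (T - k) * f + fB)))"
proof -
  interpret htlc_fee_gap T n lam f fA fB
    using lam_pos lam_sum fA_bounds(1) fee_gap_of_Min_bound[OF _ _ fA_bounds(1) fB_gt]
    by unfold_locales auto
  have "k < T"
    using k_range by simp
  have "(\<forall>j<n. \<sigma> j k Red = Unrel) \<and>
      (\<forall>i<n. util T n lam f fA fB \<sigma> i k Red = lam i * (real (T - k) * f + fB))"
    if "is_SPE T n lam f fA fB \<sigma> k" for \<sigma>
  proof -
    have plays: "plays_timeout_from T n k \<sigma>"
      using SPE_plays_timeout[OF that] \<open>k < T\<close> by simp
    have "T + 1 - k = Suc (T - k)"
      using \<open>k < T\<close> by simp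
    then have "util T n lam f fA fB \<sigma> i k Red = lam i * (real (T - k) * f + fB)" if "i < n" for i
      using util_aux_Red_timeout[OF plays _ that] \<open>k < T\<close> by (simp only: util_def)
    then show ?thesis
      using plays \<open>k < T\<close> by (simp add: plays_timeout_from_def timeout_action_def)
  qed
  then show ?thesis
    using timeout_profile_is_SPE by blast
qed

end
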